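(* Let $P\subseteq S_n$ be a permutation array with Hamming distance $d$, and let $m\in\{1,\ldots,n-1\}$. Suppose that for any $\sigma,\tau\in P$ the disjoint cycle decomposition of $\sigma^{-1}\tau$ has no cycle of odd length $\ell\in\{3,\ldots,2m+1\}$. Then (1) ${\rm hd}(P^{{\sf CT}^m})\ge d-2m$, and (2) if $d>2m$ then $|P^{{\sf CT}^m}|=|P|$.
   Context: $S_n$ is the symmetric group on $\{0,1,\ldots,n-1\}$, with composition from left to right: $\tau\sigma(x):=\sigma(\tau(x))$. A permutation array is a non-empty subset $P\subseteq S_n$; ${\rm hd}(\sigma,\tau)=|\{x:\sigma(x)\neq\tau(x)\}|$ and the Hamming distance of $P$ is ${\rm hd}(P)=\min\{{\rm hd}(\sigma,\tau):\sigma,\tau\in P,\ \sigma\neq\tau\}$. The contraction of $\sigma\in S_n$ is $\sigma^{\sf CT}\in S_{n-1}$ (on $\{0,\ldots,n-2\}$) defined by $\sigma^{\sf CT}(x)=\sigma(n-1)$ if $x=\sigma^{-1}(n-1)$ and $\sigma^{\sf CT}(x)=\sigma(x)$ otherwise (i.e. delete $n-1$ from the cycle notation). For $1\le m\le n-1$, $\sigma^{{\sf CT}^m}=(\sigma^{{\sf CT}^{m-1}})^{\sf CT}\in S_{n-m}$ with $\sigma^{{\sf CT}^1}=\sigma^{\sf CT}$, and $P^{{\sf CT}^m}=\{\sigma^{{\sf CT}^m}:\sigma\in P\}$. *)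

theory Defs
  imports "HOL-Combinatorics.Permutations"
begin

text \<open>Composition in the paper is left to right:
  (tau sigma)(x) = sigma(tau(x)), so the paper's sigma^{-1} tau is the
  Isabelle function  tau o inv sigma.\<close>

definition perm_array :: "nat \<Rightarrow> (nat \<Rightarrow> nat) set \<Rightarrow> bool" where
  "perm_array n P \<longleftrightarrow> P \<noteq> {} \<and> (\<forall>\<sigma>\<in>P. \<sigma> permutes {..<n})"

definition hd_perm :: "nat \<Rightarrow> (nat \<Rightarrow> nat) \<Rightarrow> (nat \<Rightarrow> nat) \<Rightarrow> nat" where
  "hd_perm n \<sigma> \<tau> = card {x \<in> {..<n}. \<sigma> x \<noteq> \<tau> x}"

definition hd_array :: "nat \<Rightarrow> (nat \<Rightarrow> nat) set \<Rightarrow> nat" where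
  "hd_array n P = Inf {hd_perm n \<sigma> \<tau> | \<sigma> \<tau>. \<sigma> \<in> P \<and> \<tau> \<in> P \<and> \<sigma> \<noteq> \<tau>}"

text \<open>Contraction of sigma in S_n to S_{n-1}: delete n-1 from the cycle notation.\<close>
definition contract :: "nat \<Rightarrow> (nat \<Rightarrow> nat) \<Rightarrow> (nat \<Rightarrow> nat)" where
  "contract n \<sigma> = (\<lambda>x. if x < n - 1 then (if \<sigma> x = n - 1 then \<sigma> (n - 1) else \<sigma> x) else x)"

fun contract_iter :: "nat \<Rightarrow> nat \<Rightarrow> (nat \<Rightarrow> nat) \<Rightarrow> (nat \<Rightarrow> nat)" where
  "contract_iter 0 n \<sigma> = \<sigma>"
| "contract_iter (Suc m) n \<sigma> = contract (n - m) (contract_iter m n \<sigma>)"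

definition contract_array :: "nat \<Rightarrow> nat \<Rightarrow> (nat \<Rightarrow> nat) set \<Rightarrow> (nat \<Rightarrow> nat) set" where
  "contract_array m n P = contract_iter m n ` P"

definition cycle_length :: "(nat \<Rightarrow> nat) \<Rightarrow> nat \<Rightarrow> nat" where
  "cycle_length \<pi> x = card {(\<pi> ^^ k) x | k. True}"

definition has_cycle_of_length :: "nat \<Rightarrow> (nat \<Rightarrow> nat) \<Rightarrow> nat \<Rightarrow> bool" where
  "has_cycle_of_length n \<pi> l \<longleftrightarrow> (\<exists>x<n. cycle_length \<pi> x = l)"

end

theory Submission
  imports Defs "HOL-Combinatorics.Orbits"
begin

text \<open>Write \<open>\<pi> = \<tau> \<circ> inv \<sigma>\<close>; the points where \<open>\<sigma>\<close> and \<open>\<tau>\<close> agree correspond to the fixed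
  points of \<open>\<pi>\<close>. Call a cycle \<open>Z\<close> of \<open>\<pi>\<close> heavy for a set \<open>B\<close> if \<open>|Z|\<close> is odd and
  \<open>|Z| \<le> 2|Z \<inter> B| + 1\<close>. For \<open>B = {}\<close> the heavy cycles are exactly the fixed points, and for
  \<open>B = {n-m..<n}\<close>, the points deleted by the contractions, the hypothesis on odd cycles again
  leaves only the fixed points. Contracting \<open>\<sigma>\<close> and \<open>\<tau>\<close> at \<open>y = k-1\<close> composes \<open>\<pi>\<close> with the
  transposition of \<open>y\<close> and \<open>\<sigma> y\<close> (merging or splitting a cycle) and then deletes \<open>y\<close> from its
  cycle; a case analysis shows that the number of heavy cycles for \<open>B - {y}\<close> grows by at most one.
  Hence \<open>m\<close> contractions create at most \<open>m\<close> new agreements while removing \<open>m\<close> positions, so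
  every Hamming distance drops by at most \<open>2m\<close>, and distinct permutations stay distinct when
  \<open>d > 2m\<close>.\<close>

lemma orbit_eq_if_in_orbit:
  assumes "permutation f" "y \<in> orbit f x"
  shows "orbit f y = orbit f x"
  using assms cyclic_on_orbit' orbit_cyclic_eq3 by metis

lemma orbit_comp_transpose_merge:
  assumes perm: "permutation f" and v: "v \<notin> orbit f u"
  shows "orbit (f \<circ> transpose u v) u = orbit f u \<union> orbit f v"
proof -
  define g where "g = f \<circ> transpose u v"
  have self: "u \<in> orbit f u" "v \<in> orbit f v"
    using permutation_self_in_orbit[OF perm] by auto
  have u: "u \<notin> orbit f v"
    using orbit_swap[OF self(2)] v by blast
  have g_u: "g u = f v" and g_v: "g v = f u" unfolding g_def by simp_all
  have g_s: "g s = f s" if "s \<noteq> u" "s \<noteq> v" for s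
    using that unfolding g_def by simp
  have orbit_g_u: "orbit g u \<subseteq> orbit f u \<union> orbit f v"
  proof
    fix s assume "s \<in> orbit g u"
    then show "s \<in> orbit f u \<union> orbit f v"
    proof induction
      case base
      show ?case using orbit.base[of f v] unfolding g_u by blast
    next
      case (step s)
      then show ?case
        using orbit.base[of f u] orbit.base[of f v] orbit.step[of s f u] orbit.step[of s f v] g_v g_s
        by (cases "s = u"; cases "s = v") (auto simp: g_u)
    qed
  qed
  have orbit_f_v: "orbit f v \<subseteq> orbit g u"
  proof
    fix s assume "s \<in> orbit f v"
    then show "s \<in> orbit g u"
    proof induction
      case base
      show ?case using orbit.base[of g u] unfolding g_u .
    next
      case (step s)
      then have "s \<noteq> u" using u by blast
      then show ?case
        using step.IH orbit.base[of g u] orbit.step[of s g u] g_u g_s by (cases "s = v") auto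
    qed
  qed
  moreover have "orbit f u \<subseteq> orbit g u"
  proof
    fix s assume "s \<in> orbit f u"
    then show "s \<in> orbit g u"
    proof induction
      case base
      show ?case using orbit.step[of v g u] orbit_f_v self(2) g_v by auto
    next
      case (step s)
      then have "s \<noteq> v" using v by blast
      then show ?case
        using step.IH orbit_f_v self(2) orbit.step[of s g u] orbit.step[of v g u] g_v g_s
        by (cases "s = u") auto
    qed
  qed
  ultimately have "orbit g u = orbit f u \<union> orbit f v"
    using orbit_g_u by (intro subset_antisym) auto
  then show ?thesis unfolding g_def .
qed

lemma not_in_orbit_comp_transpose_split:
  assumes v: "v \<in> orbit f u" and "u \<noteq> v"
  shows "u \<notin> orbit (f \<circ> transpose u v) v"
proof -
  txt \<open>The orbit of \<open>v\<close> under \<open>f \<circ> transpose u v\<close> runs along the arc \<open>f u, f\<^sup>2 u, \<dots>, v\<close>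
    of the \<open>f\<close>-orbit of \<open>u\<close> and then jumps back to \<open>f u\<close>.\<close>
  define d where "d = funpow_dist1 f u v"
  define arc where "arc = (\<lambda>i. (f ^^ i) u) ` {1..d}"
  have fd: "(f ^^ d) u = v"
    unfolding d_def using funpow_dist1_prop[OF v] .
  have before: "(f ^^ i) u \<noteq> v" if "0 < i" "i < d" for i
    using funpow_dist1_least[of i f u v] that unfolding d_def by simp
  have f_u: "f u \<in> arc"
    unfolding arc_def d_def by (rule image_eqI[of _ _ 1]) auto
  have u_arc: "u \<notin> arc"
  proof
    assume "u \<in> arc"
    then obtain i where i: "i \<in> {1..d}" "(f ^^ i) u = u"
      unfolding arc_def by (metis imageE)
    have "i \<noteq> d" using i(2) fd \<open>u \<noteq> v\<close> by metis
    have "(f ^^ (d - i)) u = (f ^^ (d - i)) ((f ^^ i) u)" using i(2) by simp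
    also have "\<dots> = (f ^^ (d - i + i)) u" by (simp add: funpow_add)
    also have "\<dots> = v" using fd i(1) by simp
    finally show False using before[of "d - i"] i(1) \<open>i \<noteq> d\<close> by simp
  qed
  have "orbit (f \<circ> transpose u v) v \<subseteq> arc"
  proof
    fix s assume "s \<in> orbit (f \<circ> transpose u v) v"
    then show "s \<in> arc"
    proof induction
      case base
      show ?case using f_u by simp
    next
      case (step s)
      then obtain i where i: "i \<in> {1..d}" "s = (f ^^ i) u" unfolding arc_def by blast
      have "s \<noteq> u" using step.IH u_arc by blast
      show ?case
      proof (cases "i = d")
        case True
        then show ?thesis using i fd f_u by simp
      next
        case False
        then have "s \<noteq> v" using before i by simp
        then have "(f \<circ> transpose u v) s = (f ^^ Suc i) u"
          using i(2) \<open>s \<noteq> u\<close> by simp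
        also have "\<dots> \<in> arc"
          unfolding arc_def by (rule image_eqI[of _ _ "Suc i"]) (use i(1) False in auto)
        finally show ?thesis .
      qed
    qed
  qed
  then show ?thesis using u_arc by blast
qed

lemma orbits_disjoint:
  assumes "permutation f" "x \<notin> orbit f y"
  shows "orbit f y \<inter> orbit f x = {}"
proof -
  have "x \<in> orbit f y" if "z \<in> orbit f y" "z \<in> orbit f x" for z
    using orbit_eq_if_in_orbit[OF assms(1) that(1)] orbit_eq_if_in_orbit[OF assms(1) that(2)]
      permutation_self_in_orbit[OF assms(1), of x] by simp
  then show ?thesis using assms(2) by blast
qed

lemma orbit_comp_transpose_split:
  assumes perm: "permutation f" and v: "v \<in> orbit f u" and "u \<noteq> v"
  shows "v \<notin> orbit (f \<circ> transpose u v) u"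
    and "orbit f u = orbit (f \<circ> transpose u v) u \<union> orbit (f \<circ> transpose u v) v"
proof -
  define g where "g = f \<circ> transpose u v"
  have perm_g: "permutation g"
    unfolding g_def using perm by (simp add: permutation_compose permutation_swap_id)
  have "u \<notin> orbit g v"
    unfolding g_def using not_in_orbit_comp_transpose_split[OF v \<open>u \<noteq> v\<close>] .
  then have v_notin: "v \<notin> orbit g u"
    using orbit_swap[OF permutation_self_in_orbit[OF perm_g]] by blast
  then show "v \<notin> orbit (f \<circ> transpose u v) u" unfolding g_def .
  have "f = g \<circ> transpose u v"
    unfolding g_def by (simp add: comp_assoc)
  then show "orbit f u = orbit (f \<circ> transpose u v) u \<union> orbit (f \<circ> transpose u v) v"
    using orbit_comp_transpose_merge[OF perm_g v_notin] unfolding g_def by simp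
qed

lemma orbit_comp_transpose_other:
  assumes perm: "permutation f" and "x \<notin> orbit f u" "x \<notin> orbit f v"
  shows "orbit (f \<circ> transpose u v) x = orbit f x"
proof (rule orbit_cong)
  show "x \<in> orbit f x" using permutation_self_in_orbit[OF perm] .
  fix s assume "s \<in> orbit f x"
  then have "x \<in> orbit f s"
    using orbit_eq_if_in_orbit[OF perm, of s x] permutation_self_in_orbit[OF perm, of x] by simp
  then have "s \<noteq> u" "s \<noteq> v" using assms(2,3) by auto
  then show "(f \<circ> transpose u v) s = f s" by simp
qed

lemma orbits_insert:
  assumes perm: "permutation f" and "x \<in> S"
  shows "orbit f ` S = insert (orbit f x) (orbit f ` (S - orbit f x))"
    and "orbit f x \<notin> orbit f ` (S - orbit f x)"
proof -
  show "orbit f ` S = insert (orbit f x) (orbit f ` (S - orbit f x))"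
  proof (intro equalityI subsetI)
    fix Z assume "Z \<in> orbit f ` S"
    then obtain y where "y \<in> S" "Z = orbit f y" by blast
    show "Z \<in> insert (orbit f x) (orbit f ` (S - orbit f x))"
    proof (cases "y \<in> orbit f x")
      case True
      then show ?thesis using orbit_eq_if_in_orbit[OF perm True] \<open>Z = orbit f y\<close> by simp
    next
      case False
      then show ?thesis using \<open>y \<in> S\<close> \<open>Z = orbit f y\<close> by blast
    qed
  qed (use assms(2) in auto)
  show "orbit f x \<notin> orbit f ` (S - orbit f x)"
    using permutation_self_in_orbit[OF perm] by blast
qed

lemma sum_orbits_comp_transpose_merge:
  fixes w :: "'a set \<Rightarrow> 'b::comm_monoid_add"
  assumes "f permutes S" "finite S" "u \<in> S" "v \<in> S" and v: "v \<notin> orbit f u"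
  shows "(\<Sum>Z\<in>orbit (f \<circ> transpose u v) ` S. w Z) + w (orbit f u) + w (orbit f v)
       = (\<Sum>Z\<in>orbit f ` S. w Z) + w (orbit f u \<union> orbit f v)"
proof -
  define g where "g = f \<circ> transpose u v"
  define U where "U = orbit f u \<union> orbit f v"
  define R where "R = orbit f ` (S - U)"
  have perm: "permutation f"
    using assms(1,2) permutation_permutes by blast
  have perm_g: "permutation g"
    unfolding g_def using perm by (simp add: permutation_compose permutation_swap_id)
  have g_u: "orbit g u = U"
    unfolding g_def U_def using orbit_comp_transpose_merge[OF perm v] .
  have S_U: "S - orbit f u - orbit f v = S - U"
    unfolding U_def by blast
  note f_u = orbits_insert[OF perm assms(3)]
  note f_v = orbits_insert[OF perm, of v "S - orbit f u"]
  note g_u' = orbits_insert[OF perm_g assms(3), unfolded g_u]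
  have "orbit g ` (S - U) = R"
    unfolding R_def g_def U_def using orbit_comp_transpose_other[OF perm] by (auto intro: image_cong)
  then have g_orbits: "orbit g ` S = insert U R" and "U \<notin> R"
    using g_u' by simp_all
  have f_orbits: "orbit f ` S = insert (orbit f u) (insert (orbit f v) R)"
    using f_u(1) f_v(1) assms(4) v unfolding R_def S_U by simp
  have "orbit f u \<noteq> orbit f v"
    using v permutation_self_in_orbit[OF perm, of v] by blast
  moreover have "orbit f u \<notin> R" "orbit f v \<notin> R"
    using f_u(2) f_v(2) assms(4) v unfolding R_def S_U[symmetric] by blast+
  moreover have "finite R"
    unfolding R_def using assms(2) by simp
  ultimately show ?thesis
    unfolding g_def[symmetric] f_orbits g_orbits U_def[symmetric]
    using \<open>U \<notin> R\<close> by (simp add: ac_simps)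
qed

text \<open>The potential of the proof: in the application, \<open>B\<close> is the set of points that are still to
  be deleted by contraction.\<close>
definition heavy_cycle :: "'a set \<Rightarrow> 'a set \<Rightarrow> bool" where
  "heavy_cycle B Z \<longleftrightarrow> odd (card Z) \<and> card Z \<le> 2 * card (Z \<inter> B) + 1"

definition num_heavy_cycles :: "('a \<Rightarrow> 'a) \<Rightarrow> 'a set \<Rightarrow> 'a set \<Rightarrow> nat" where
  "num_heavy_cycles f S B = (\<Sum>Z\<in>orbit f ` S. of_bool (heavy_cycle B Z))"

lemma heavy_cycle_singleton [simp]: "heavy_cycle B {x}"
  unfolding heavy_cycle_def by simp

lemma not_heavy_cycle_empty [simp]: "\<not> heavy_cycle B {}"
  unfolding heavy_cycle_def by simp

lemma heavy_cycle_Un: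
  assumes "finite Y" "finite Q" "Y \<inter> Q = {}" "y \<in> Y" "y \<in> B"
    and "heavy_cycle B Q" "heavy_cycle B (Y - {y})"
  shows "heavy_cycle B (Y \<union> Q)"
proof -
  have "card Y = card (Y - {y}) + 1"
    using assms(1,4) card_Suc_Diff1 by fastforce
  moreover have "card (Y \<inter> B) = card ((Y - {y}) \<inter> B) + 1"
  proof -
    have "(Y - {y}) \<inter> B = Y \<inter> B - {y}" by blast
    then show ?thesis using assms(1,4,5) card_Suc_Diff1[of "Y \<inter> B" y] by simp
  qed
  moreover have "card (Y \<union> Q) = card Y + card Q"
    using assms(1-3) by (rule card_Un_disjoint)
  moreover have "card ((Y \<union> Q) \<inter> B) = card (Y \<inter> B) + card (Q \<inter> B)"
  proof -
    have "(Y \<union> Q) \<inter> B = Y \<inter> B \<union> Q \<inter> B" by blast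
    then show ?thesis using assms(1-3) card_Un_disjoint[of "Y \<inter> B" "Q \<inter> B"] by fastforce
  qed
  ultimately show ?thesis
    using assms(6,7) unfolding heavy_cycle_def by auto
qed

lemma num_heavy_cycles_comp_transpose_le:
  assumes "f permutes S" "finite S" "y \<in> S" "y \<in> B" "x \<in> S"
  defines "g \<equiv> f \<circ> transpose y x"
  shows "num_heavy_cycles g S B + of_bool (heavy_cycle B (orbit g y - {y}))
       \<le> num_heavy_cycles f S B + 1 + of_bool (heavy_cycle B (orbit g y))"
proof -
  let ?h = "\<lambda>Z. of_bool (heavy_cycle B Z) :: nat"
  have perm: "permutation f"
    using assms(1,2) permutation_permutes by blast
  have g_permutes: "g permutes S"
    unfolding g_def using assms(1,3,5) by (simp add: permutes_compose permutes_swap_id)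
  have "?h Z \<le> 1" for Z by simp
  consider (same) "x = y" | (split) "x \<noteq> y" "x \<in> orbit f y" | (merge) "x \<notin> orbit f y"
    by blast
  then show ?thesis
  proof cases
    case same
    then show ?thesis unfolding g_def by simp
  next
    case split
    have perm_g: "permutation g"
      using g_permutes assms(2) permutation_permutes by blast
    have x_notin: "x \<notin> orbit g y"
      using orbit_comp_transpose_split(1)[OF perm split(2) not_sym[OF split(1)]] unfolding g_def .
    have f_y: "orbit f y = orbit g y \<union> orbit g x"
      using orbit_comp_transpose_split(2)[OF perm split(2)] split(1) unfolding g_def by auto
    have "g \<circ> transpose y x = f"
      unfolding g_def by (simp add: comp_assoc)
    then have sums: "num_heavy_cycles f S B + ?h (orbit g y) + ?h (orbit g x)
        = num_heavy_cycles g S B + ?h (orbit f y)"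
      using sum_orbits_comp_transpose_merge[OF g_permutes assms(2,3,5) x_notin, of ?h] f_y
      unfolding num_heavy_cycles_def by simp
    have "finite (orbit g y)" "finite (orbit g x)"
      using permutes_orbit_subset[OF g_permutes] assms(2,3,5) finite_subset by blast+
    then have "heavy_cycle B (orbit f y)"
      if "heavy_cycle B (orbit g x)" "heavy_cycle B (orbit g y - {y})"
      using heavy_cycle_Un[OF _ _ orbits_disjoint[OF perm_g x_notin] _ assms(4) that] f_y
        permutation_self_in_orbit[OF perm_g, of y] by simp
    then show ?thesis using sums
      by (cases "heavy_cycle B (orbit g x)"; cases "heavy_cycle B (orbit g y - {y})") auto
  next
    case merge
    have "orbit g y = orbit f y \<union> orbit f x"
      unfolding g_def using orbit_comp_transpose_merge[OF perm merge] .
    then have "num_heavy_cycles g S B + ?h (orbit f y) + ?h (orbit f x)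
        = num_heavy_cycles f S B + ?h (orbit g y)"
      using sum_orbits_comp_transpose_merge[OF assms(1,2,3,5) merge, of ?h]
      unfolding num_heavy_cycles_def g_def by simp
    then show ?thesis using \<open>?h (orbit g y - {y}) \<le> 1\<close> by linarith
  qed
qed

lemma num_heavy_cycles_remove_fixpoint:
  assumes "g permutes S" "finite S" "y \<in> S" "g y = y"
  shows "num_heavy_cycles g (S - {y}) (B - {y}) + 1 = num_heavy_cycles g S B"
proof -
  have perm: "permutation g"
    using assms(1,2) permutation_permutes by blast
  have g_y: "orbit g y = {y}"
    using assms(4) orbit_eq_singleton_iff by metis
  note S_y = orbits_insert[OF perm assms(3), unfolded g_y]
  have "y \<notin> orbit g x" if "x \<in> S - {y}" for x
  proof
    assume "y \<in> orbit g x"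
    then have "orbit g x = {y}"
      using orbit_eq_if_in_orbit[OF perm] g_y by metis
    then show False
      using S_y(2) that by (metis imageI)
  qed
  then have "heavy_cycle (B - {y}) Z = heavy_cycle B Z" if "Z \<in> orbit g ` (S - {y})" for Z
    using that unfolding heavy_cycle_def by (metis Diff_empty Diff_insert0 Int_Diff inf_commute imageE)
  then show ?thesis
    unfolding num_heavy_cycles_def S_y(1) using S_y(2) assms(2) by simp
qed

lemma num_heavy_cycles_delete:
  assumes "g permutes S" "finite S" "y \<in> S"
  shows "num_heavy_cycles (g \<circ> transpose y (inv g y)) (S - {y}) (B - {y})
           + of_bool (heavy_cycle B (orbit g y))
       = num_heavy_cycles g S B + of_bool (heavy_cycle B (orbit g y - {y}))"
proof -
  let ?h = "\<lambda>Z. of_bool (heavy_cycle B Z) :: nat"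
  define c where "c = inv g y"
  define g' where "g' = g \<circ> transpose y c"
  have perm: "permutation g"
    using assms(1,2) permutation_permutes by blast
  have g_c: "g c = y"
    unfolding c_def using permutes_inverses(1)[OF assms(1)] .
  have c: "c \<in> S"
    using permutes_in_image[OF assms(1), of c] g_c assms(3) by simp
  have g'_permutes: "g' permutes S"
    unfolding g'_def using assms(1,3) c by (simp add: permutes_compose permutes_swap_id)
  have g'_y: "g' y = y"
    unfolding g'_def using g_c by simp
  have "num_heavy_cycles g' S B + ?h (orbit g y) = num_heavy_cycles g S B + 1 + ?h (orbit g y - {y})"
  proof (cases "c = y")
    case True
    then have "orbit g y = {y}"
      using g_c orbit_eq_singleton_iff by metis
    then show ?thesis
      unfolding g'_def True by simp
  next
    case False
    have "y \<in> orbit g c"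
      using orbit.base[of g c] g_c by simp
    then have c_y: "c \<in> orbit g y"
      using orbit_swap[OF permutation_self_in_orbit[OF perm]] by blast
    note split = orbit_comp_transpose_split[OF perm c_y False[symmetric], folded g'_def]
    have g'_y_orbit: "orbit g' y = {y}"
      using g'_y orbit_eq_singleton_iff by metis
    have "orbit g' c = orbit g y - {y}"
      using split(2) orbits_disjoint[OF _ split(1)] g'_permutes assms(2) permutation_permutes
      unfolding g'_y_orbit by blast
    moreover have "g' \<circ> transpose y c = g"
      unfolding g'_def by (simp add: comp_assoc)
    ultimately show ?thesis
      using sum_orbits_comp_transpose_merge[OF g'_permutes assms(2,3) c split(1), of ?h] split(2)
      unfolding num_heavy_cycles_def g'_y_orbit by simp
  qed
  moreover have "num_heavy_cycles g' (S - {y}) (B - {y}) + 1 = num_heavy_cycles g' S B"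
    using num_heavy_cycles_remove_fixpoint[OF g'_permutes assms(2,3) g'_y] .
  ultimately show ?thesis
    unfolding g'_def c_def by linarith
qed

lemma num_heavy_cycles_empty:
  assumes "f permutes S" "finite S"
  shows "num_heavy_cycles f S {} = card {x \<in> S. f x = x}"
proof -
  have perm: "permutation f"
    using assms permutation_permutes by blast
  have "heavy_cycle {} Z \<longleftrightarrow> card Z = 1" for Z :: "'a set"
    unfolding heavy_cycle_def by (cases "card Z") auto
  moreover have "{Z \<in> orbit f ` S. card Z = 1} = (\<lambda>x. {x}) ` {x \<in> S. f x = x}"
  proof (intro equalityI subsetI)
    fix Z assume "Z \<in> {Z \<in> orbit f ` S. card Z = 1}"
    then obtain x where x: "x \<in> S" "Z = orbit f x" "card Z = 1" by blast
    then have "Z = {x}"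
      using permutation_self_in_orbit[OF perm, of x] by (metis card_1_singletonE singletonD)
    then show "Z \<in> (\<lambda>x. {x}) ` {x \<in> S. f x = x}"
      using x orbit_eq_singleton_iff[of f x] by auto
  next
    fix Z assume "Z \<in> (\<lambda>x. {x}) ` {x \<in> S. f x = x}"
    then obtain x where "x \<in> S" "f x = x" "Z = {x}" by blast
    then show "Z \<in> {Z \<in> orbit f ` S. card Z = 1}"
      using orbit_eq_singleton_iff[of f x] by (metis (mono_tags, lifting) card.empty card_insert_disjoint
          empty_iff finite.intros(1) imageI mem_Collect_eq One_nat_def)
  qed
  ultimately show ?thesis
    unfolding num_heavy_cycles_def using assms(2)
    by (simp add: Int_def card_image)
qed

lemma num_heavy_cycles_le_empty:
  assumes "finite B"
    and "\<And>Z. Z \<in> orbit f ` S \<Longrightarrow> odd (card Z) \<Longrightarrow> 3 \<le> card Z \<Longrightarrow> 2 * card B + 1 < card Z"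
  shows "num_heavy_cycles f S B \<le> num_heavy_cycles f S {}"
  unfolding num_heavy_cycles_def
proof (rule sum_mono)
  fix Z assume Z: "Z \<in> orbit f ` S"
  show "of_bool (heavy_cycle B Z) \<le> (of_bool (heavy_cycle {} Z) :: nat)"
  proof (cases "heavy_cycle B Z")
    case True
    have "card (Z \<inter> B) \<le> card B"
      using assms(1) by (simp add: card_mono)
    then have "card Z = 1"
      using True assms(2)[OF Z] unfolding heavy_cycle_def by presburger
    then show ?thesis
      unfolding heavy_cycle_def by simp
  qed simp
qed

lemma contract_eq_transpose_comp:
  assumes "\<sigma> permutes {..<k}" "0 < k"
  shows "contract k \<sigma> = transpose (k - 1) (\<sigma> (k - 1)) \<circ> \<sigma>"
proof
  fix x
  have "\<sigma> x = \<sigma> (k - 1) \<longleftrightarrow> x = k - 1"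
    using permutes_inj[OF assms(1)] by (auto dest: injD)
  moreover have "\<sigma> (k - 1) < k"
    using permutes_in_image[OF assms(1), of "k - 1"] assms(2) by simp
  moreover have "\<sigma> x = x" if "k \<le> x"
    using permutes_not_in[OF assms(1)] that by simp
  ultimately show "contract k \<sigma> x = (transpose (k - 1) (\<sigma> (k - 1)) \<circ> \<sigma>) x"
    unfolding contract_def transpose_def by auto
qed

lemma contract_permutes:
  assumes "\<sigma> permutes {..<k}" "0 < k"
  shows "contract k \<sigma> permutes {..<k - 1}"
proof -
  have "{..<k} = insert (k - 1) {..<k - 1}"
    using assms(2) by auto
  then show ?thesis
    using permutes_insert_lemma[of \<sigma> "k - 1" "{..<k - 1}"] assms
    by (simp add: contract_eq_transpose_comp)
qed

text \<open>In terms of \<open>\<pi> = \<tau> \<circ> inv \<sigma>\<close>, a contraction composes \<open>\<pi>\<close> with a transposition and then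
  deletes \<open>k - 1\<close> from its cycle (the map \<open>g \<mapsto> g \<circ> transpose y (inv g y)\<close>).\<close>
lemma contract_comp_inv_contract:
  assumes "\<sigma> permutes {..<k}" "\<tau> permutes {..<k}" "0 < k"
  defines "g \<equiv> \<tau> \<circ> inv \<sigma> \<circ> transpose (k - 1) (\<sigma> (k - 1))"
  shows "contract k \<tau> \<circ> inv (contract k \<sigma>) = g \<circ> transpose (k - 1) (inv g (k - 1))"
proof -
  let ?y = "k - 1"
  have bij_g: "bij g"
    unfolding g_def using permutes_bij[OF assms(1)] permutes_bij[OF assms(2)]
    by (simp add: bij_comp bij_imp_bij_inv)
  have g_y: "g ?y = \<tau> ?y"
    unfolding g_def using permutes_inverses(2)[OF assms(1)] by simp
  have "inv (contract k \<sigma>) = inv \<sigma> \<circ> transpose ?y (\<sigma> ?y)"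
    unfolding contract_eq_transpose_comp[OF assms(1,3)]
    using permutes_bij[OF assms(1)] by (simp add: o_inv_distrib)
  then have "contract k \<tau> \<circ> inv (contract k \<sigma>) = transpose ?y (\<tau> ?y) \<circ> g"
    unfolding contract_eq_transpose_comp[OF assms(2,3)] g_def by (simp add: comp_assoc)
  also have "\<dots> = g \<circ> transpose (inv g ?y) ?y"
    using transpose_comp_eq[OF bij_g, of ?y "\<tau> ?y"] bij_inv_eq_iff[OF bij_g, of ?y "\<tau> ?y"] g_y
    by simp
  finally show ?thesis
    by (simp add: transpose_commute)
qed

lemma num_heavy_cycles_contract:
  assumes "\<sigma> permutes {..<k}" "\<tau> permutes {..<k}" "0 < k" "k - 1 \<in> B"
  shows "num_heavy_cycles (contract k \<tau> \<circ> inv (contract k \<sigma>)) {..<k - 1} (B - {k - 1})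
       \<le> num_heavy_cycles (\<tau> \<circ> inv \<sigma>) {..<k} B + 1"
proof -
  let ?y = "k - 1"
  define g where "g = \<tau> \<circ> inv \<sigma> \<circ> transpose ?y (\<sigma> ?y)"
  have y: "?y \<in> {..<k}"
    using assms(3) by simp
  have \<pi>_permutes: "\<tau> \<circ> inv \<sigma> permutes {..<k}"
    using permutes_compose[OF permutes_inv[OF assms(1)] assms(2)] .
  have g_permutes: "g permutes {..<k}"
    unfolding g_def using \<pi>_permutes permutes_in_image[OF assms(1)] y
    by (simp add: permutes_compose permutes_swap_id)
  have "{..<k} - {?y} = {..<k - 1}"
    using assms(3) by auto
  then have "num_heavy_cycles (contract k \<tau> \<circ> inv (contract k \<sigma>)) {..<k - 1} (B - {?y})
        + of_bool (heavy_cycle B (orbit g ?y))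
      = num_heavy_cycles g {..<k} B + of_bool (heavy_cycle B (orbit g ?y - {?y}))"
    using num_heavy_cycles_delete[OF g_permutes _ y, of B]
    unfolding contract_comp_inv_contract[OF assms(1-3)] g_def by simp
  moreover have "num_heavy_cycles g {..<k} B + of_bool (heavy_cycle B (orbit g ?y - {?y}))
      \<le> num_heavy_cycles (\<tau> \<circ> inv \<sigma>) {..<k} B + 1 + of_bool (heavy_cycle B (orbit g ?y))"
    unfolding g_def
    using num_heavy_cycles_comp_transpose_le[OF \<pi>_permutes _ y assms(4)] permutes_in_image[OF assms(1)] y
    by simp
  ultimately show ?thesis
    by linarith
qed

lemma contract_iter_permutes:
  assumes "\<sigma> permutes {..<n}" "j \<le> n"
  shows "contract_iter j n \<sigma> permutes {..<n - j}"
  using assms(2)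
proof (induction j)
  case (Suc j)
  then show ?case
    using contract_permutes[of "contract_iter j n \<sigma>" "n - j"] by (simp add: diff_Suc)
qed (simp add: assms(1))

lemma num_heavy_cycles_contract_iter:
  assumes "\<sigma> permutes {..<n}" "\<tau> permutes {..<n}" "j \<le> m" "m \<le> n"
  shows "num_heavy_cycles (contract_iter j n \<tau> \<circ> inv (contract_iter j n \<sigma>)) {..<n - j} {n - m..<n - j}
       \<le> num_heavy_cycles (\<tau> \<circ> inv \<sigma>) {..<n} {n - m..<n} + j"
  using assms(3)
proof (induction j)
  case (Suc j)
  let ?k = "n - j"
  have k: "0 < ?k" "?k - 1 \<in> {n - m..<?k}"
    and eqs: "?k - 1 = n - Suc j" "{n - m..<?k} - {n - Suc j} = {n - m..<n - Suc j}"
    using Suc.prems assms(4) by auto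
  have "num_heavy_cycles (contract ?k (contract_iter j n \<tau>) \<circ> inv (contract ?k (contract_iter j n \<sigma>)))
      {..<?k - 1} ({n - m..<?k} - {?k - 1})
    \<le> num_heavy_cycles (contract_iter j n \<tau> \<circ> inv (contract_iter j n \<sigma>)) {..<?k} {n - m..<?k} + 1"
    using contract_iter_permutes[OF assms(1), of j] contract_iter_permutes[OF assms(2), of j] Suc.prems
      assms(4) k by (intro num_heavy_cycles_contract) auto
  then show ?case
    using Suc.IH Suc.prems unfolding eqs contract_iter.simps by linarith
qed simp

lemma card_agree_eq_card_fixpoints:
  assumes "\<sigma> permutes S" "\<tau> permutes S"
  shows "card {x \<in> S. \<sigma> x = \<tau> x} = card {y \<in> S. (\<tau> \<circ> inv \<sigma>) y = y}"
proof -
  have fixpoints: "{y \<in> S. (\<tau> \<circ> inv \<sigma>) y = y} = \<sigma> ` {x \<in> S. \<sigma> x = \<tau> x}"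
  proof (intro equalityI subsetI)
    fix y assume "y \<in> {y \<in> S. (\<tau> \<circ> inv \<sigma>) y = y}"
    then have "inv \<sigma> y \<in> S" "\<sigma> (inv \<sigma> y) = \<tau> (inv \<sigma> y)" "y = \<sigma> (inv \<sigma> y)"
      using permutes_inverses(1)[OF assms(1)] permutes_in_image[OF assms(1), of "inv \<sigma> y"] by auto
    then show "y \<in> \<sigma> ` {x \<in> S. \<sigma> x = \<tau> x}" by blast
  next
    fix y assume "y \<in> \<sigma> ` {x \<in> S. \<sigma> x = \<tau> x}"
    then obtain x where x: "x \<in> S" "\<sigma> x = \<tau> x" and y: "y = \<sigma> x" by blast
    have "\<sigma> x \<in> S" "(\<tau> \<circ> inv \<sigma>) (\<sigma> x) = \<sigma> x"
      using x(1) x(2)[symmetric] permutes_inverses(2)[OF assms(1)] permutes_in_image[OF assms(1)]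
      by simp_all
    then show "y \<in> {y \<in> S. (\<tau> \<circ> inv \<sigma>) y = y}"
      unfolding y by simp
  qed
  show ?thesis
    unfolding fixpoints by (rule card_image[OF permutes_inj_on[OF assms(1)], symmetric])
qed

lemma hd_perm_add_card_agree: "hd_perm k \<sigma> \<tau> + card {x \<in> {..<k}. \<sigma> x = \<tau> x} = k"
proof -
  have "{x \<in> {..<k}. \<sigma> x \<noteq> \<tau> x} \<union> {x \<in> {..<k}. \<sigma> x = \<tau> x} = {..<k}" by blast
  then show ?thesis
    unfolding hd_perm_def by (metis (no_types, lifting) card_Un_disjoint card_lessThan disjoint_iff
        finite_lessThan finite_Un mem_Collect_eq)
qed

lemma cycle_length_eq_card_orbit: "permutation \<pi> \<Longrightarrow> cycle_length \<pi> x = card (orbit \<pi> x)"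
  unfolding cycle_length_def by (simp add: orbit_altdef_permutation)

lemma hd_perm_le_hd_perm_contract_iter:
  assumes \<sigma>: "\<sigma> permutes {..<n}" and \<tau>: "\<tau> permutes {..<n}" and "m \<le> n"
    and no_cycles: "\<forall>l. odd l \<and> 3 \<le> l \<and> l \<le> 2 * m + 1 \<longrightarrow> \<not> has_cycle_of_length n (\<tau> \<circ> inv \<sigma>) l"
  shows "hd_perm n \<sigma> \<tau> \<le> hd_perm (n - m) (contract_iter m n \<sigma>) (contract_iter m n \<tau>) + 2 * m"
proof -
  let ?\<sigma>' = "contract_iter m n \<sigma>" and ?\<tau>' = "contract_iter m n \<tau>"
  have \<pi>: "\<tau> \<circ> inv \<sigma> permutes {..<n}"
    using permutes_compose[OF permutes_inv[OF \<sigma>] \<tau>] .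
  have \<sigma>': "?\<sigma>' permutes {..<n - m}" and \<tau>': "?\<tau>' permutes {..<n - m}"
    using contract_iter_permutes \<sigma> \<tau> \<open>m \<le> n\<close> by blast+
  have \<pi>': "?\<tau>' \<circ> inv ?\<sigma>' permutes {..<n - m}"
    using permutes_compose[OF permutes_inv[OF \<sigma>'] \<tau>'] .
  have "2 * card {n - m..<n} + 1 < card Z"
    if Z: "Z \<in> orbit (\<tau> \<circ> inv \<sigma>) ` {..<n}" "odd (card Z)" "3 \<le> card Z" for Z
  proof -
    obtain x where "x < n" "Z = orbit (\<tau> \<circ> inv \<sigma>) x"
      using Z(1) by blast
    then have "has_cycle_of_length n (\<tau> \<circ> inv \<sigma>) (card Z)"
      unfolding has_cycle_of_length_def
      using cycle_length_eq_card_orbit \<pi> permutation_permutes by blast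
    then show ?thesis
      using no_cycles Z(2,3) \<open>m \<le> n\<close> by auto
  qed
  then have "num_heavy_cycles (\<tau> \<circ> inv \<sigma>) {..<n} {n - m..<n} \<le> num_heavy_cycles (\<tau> \<circ> inv \<sigma>) {..<n} {}"
    by (intro num_heavy_cycles_le_empty) simp_all
  moreover have "num_heavy_cycles (?\<tau>' \<circ> inv ?\<sigma>') {..<n - m} {}
      \<le> num_heavy_cycles (\<tau> \<circ> inv \<sigma>) {..<n} {n - m..<n} + m"
    using num_heavy_cycles_contract_iter[OF \<sigma> \<tau> order.refl \<open>m \<le> n\<close>] by simp
  ultimately have "card {x \<in> {..<n - m}. ?\<sigma>' x = ?\<tau>' x} \<le> card {x \<in> {..<n}. \<sigma> x = \<tau> x} + m"
    unfolding card_agree_eq_card_fixpoints[OF \<sigma> \<tau>] card_agree_eq_card_fixpoints[OF \<sigma>' \<tau>']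
      num_heavy_cycles_empty[OF \<pi> finite_lessThan, symmetric]
      num_heavy_cycles_empty[OF \<pi>' finite_lessThan, symmetric]
    by linarith
  then show ?thesis
    using hd_perm_add_card_agree[of n \<sigma> \<tau>] hd_perm_add_card_agree[of "n - m" ?\<sigma>' ?\<tau>'] \<open>m \<le> n\<close>
    by linarith
qed

lemma hd_array_le_hd_perm:
  "\<sigma> \<in> P \<Longrightarrow> \<tau> \<in> P \<Longrightarrow> \<sigma> \<noteq> \<tau> \<Longrightarrow> hd_array n P \<le> hd_perm n \<sigma> \<tau>"
  unfolding hd_array_def by (rule wellorder_Inf_le1) blast

lemma hd_array_attained:
  assumes "\<sigma> \<in> P" "\<tau> \<in> P" "\<sigma> \<noteq> \<tau>"
  obtains \<sigma>' \<tau>' where "\<sigma>' \<in> P" "\<tau>' \<in> P" "\<sigma>' \<noteq> \<tau>'" "hd_array n P = hd_perm n \<sigma>' \<tau>'"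
proof -
  have "{hd_perm n \<sigma> \<tau> | \<sigma> \<tau>. \<sigma> \<in> P \<and> \<tau> \<in> P \<and> \<sigma> \<noteq> \<tau>} \<noteq> {}"
    using assms by blast
  from Inf_nat_def1[OF this] show ?thesis
    using that unfolding hd_array_def by blast
qed

lemma hd_array_le_hd_array_image:
  assumes "\<And>\<sigma> \<tau>. \<sigma> \<in> P \<Longrightarrow> \<tau> \<in> P \<Longrightarrow> hd_perm n \<sigma> \<tau> \<le> hd_perm k (c \<sigma>) (c \<tau>) + e"
  shows "hd_array n P \<le> hd_array k (c ` P) + e"
proof (cases "\<exists>\<sigma>\<in>P. \<exists>\<tau>\<in>P. c \<sigma> \<noteq> c \<tau>")
  case True
  then obtain \<sigma>\<^sub>0 \<tau>\<^sub>0 where "\<sigma>\<^sub>0 \<in> P" "\<tau>\<^sub>0 \<in> P" "c \<sigma>\<^sub>0 \<noteq> c \<tau>\<^sub>0"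
    by blast
  then obtain \<rho> \<rho>' where \<rho>: "\<rho> \<in> c ` P" "\<rho>' \<in> c ` P" "\<rho> \<noteq> \<rho>'"
    and hd_image: "hd_array k (c ` P) = hd_perm k \<rho> \<rho>'"
    using hd_array_attained[of "c \<sigma>\<^sub>0" "c ` P" "c \<tau>\<^sub>0" k] by blast
  then obtain \<sigma> \<tau> where "\<sigma> \<in> P" "\<tau> \<in> P" "\<rho> = c \<sigma>" "\<rho>' = c \<tau>"
    by blast
  then show ?thesis
    using \<rho>(3) hd_image hd_array_le_hd_perm[of \<sigma> P \<tau> n] assms[of \<sigma> \<tau>] by fastforce
next
  case False
  show ?thesis
  proof (cases "\<exists>\<sigma>\<in>P. \<exists>\<tau>\<in>P. \<sigma> \<noteq> \<tau>")
    case True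
    then obtain \<sigma> \<tau> where "\<sigma> \<in> P" "\<tau> \<in> P" "\<sigma> \<noteq> \<tau>" "c \<sigma> = c \<tau>"
      using False by blast
    then show ?thesis
      using hd_array_le_hd_perm[of \<sigma> P \<tau> n] assms[of \<sigma> \<tau>] by (simp add: hd_perm_def)
  next
    case False
    txt \<open>Both minima are taken over the empty set, where \<open>Inf\<close> on \<open>nat\<close> is unspecified.\<close>
    then have "hd_array n P = hd_array k (c ` P)"
      using \<open>\<not> (\<exists>\<sigma>\<in>P. \<exists>\<tau>\<in>P. c \<sigma> \<noteq> c \<tau>)\<close> unfolding hd_array_def
      by (metis (no_types, lifting) ex_in_conv empty_Collect_eq imageE)
    then show ?thesis by simp
  qed
qed

lemma inj_on_if_hd_array_gt:
  assumes "\<And>\<sigma> \<tau>. \<sigma> \<in> P \<Longrightarrow> \<tau> \<in> P \<Longrightarrow> hd_perm n \<sigma> \<tau> \<le> hd_perm k (c \<sigma>) (c \<tau>) + e"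
    and "e < hd_array n P"
  shows "inj_on c P"
proof (rule inj_onI, rule ccontr)
  fix \<sigma> \<tau> assume "\<sigma> \<in> P" "\<tau> \<in> P" "c \<sigma> = c \<tau>" "\<sigma> \<noteq> \<tau>"
  then show False
    using hd_array_le_hd_perm[of \<sigma> P \<tau> n] assms(1)[of \<sigma> \<tau>] assms(2) by (simp add: hd_perm_def)
qed

theorem corollary5p3:
  fixes n m d :: nat and P :: "(nat \<Rightarrow> nat) set"
  assumes "perm_array n P"
    and "hd_array n P = d"
    and "1 \<le> m" and "m \<le> n - 1"
    and "\<forall>\<sigma>\<in>P. \<forall>\<tau>\<in>P. \<forall>l. odd l \<and> 3 \<le> l \<and> l \<le> 2 * m + 1
              \<longrightarrow> \<not> has_cycle_of_length n (\<tau> \<circ> inv \<sigma>) l"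
  shows "int (hd_array (n - m) (contract_array m n P)) \<ge> int d - 2 * int m
         \<and> (d > 2 * m \<longrightarrow> card (contract_array m n P) = card P)"
proof -
  have contract_bound: "hd_perm n \<sigma> \<tau>
      \<le> hd_perm (n - m) (contract_iter m n \<sigma>) (contract_iter m n \<tau>) + 2 * m"
    if "\<sigma> \<in> P" "\<tau> \<in> P" for \<sigma> \<tau>
    using hd_perm_le_hd_perm_contract_iter assms(1,4,5) that unfolding perm_array_def by simp
  have "d \<le> hd_array (n - m) (contract_array m n P) + 2 * m"
    using hd_array_le_hd_array_image[of P n "n - m" "contract_iter m n" "2 * m", OF contract_bound]
      assms(2)
    unfolding contract_array_def by simp
  moreover have "card (contract_array m n P) = card P" if "d > 2 * m"
    using card_image[OF inj_on_if_hd_array_gt[of P n "n - m" "contract_iter m n" "2 * m", OF contract_bound]]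
      assms(2) that
    unfolding contract_array_def by simp
  ultimately show ?thesis
    by auto
qed

end
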